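(* Let $\mu,P$ be Borel probability measures on $\mathbb{R}^d$ absolutely continuous w.r.t. Lebesgue measure, let $u\in\mathbb{R}^d$, let $v_u\in\arg\min_{v\in\mathcal{S}^{d-1}}\mu(\{y:\langle y-u,v\rangle\geq0\})$, and for $k\in\mathbb{N}$ let $Q_k$ be the uniform (Lebesgue) distribution on the ball $kv_u+\mathbb{B}$. Then for every $\varepsilon\in(0,1)$ with $\varepsilon>\mathrm{TD}(u;\mu)>0$, if for each $k$, $\partial\varphi_{\varepsilon,k}$ is the subdifferential of any lower semicontinuous convex function $\varphi_{\varepsilon,k}$ whose gradient pushes $\mu$ forward to $P+\varepsilon(Q_k-P)$, then $$\inf_{y\in\partial\varphi_{\varepsilon,k}(u)}\|y\|\to+\infty\quad\text{as }k\to\infty.$$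
   Context: $\mathbb{B}=\{x:\|x\|\leq1\}$; $\mathrm{TD}(u;\mu)=\min_{v\in\mathcal{S}^{d-1}}\mu(\{z:\langle v,z-u\rangle\geq0\})$; $\partial\psi(u)=\{x:\psi(z)\geq\psi(u)+\langle x,z-u\rangle\ \forall z\}$. *)

theory Defs
  imports "HOL-Probability.Probability"
begin

definition tukey_depth :: "'a::euclidean_space \<Rightarrow> 'a measure \<Rightarrow> real" where
  "tukey_depth u \<mu> = (INF v \<in> {v. norm v = 1}. measure \<mu> {z. v \<bullet> (z - u) \<ge> 0})"

definition ereal_convex :: "('a::real_vector \<Rightarrow> ereal) \<Rightarrow> bool" where
  "ereal_convex f \<longleftrightarrow> (\<forall>x y t. 0 \<le> t \<and> t \<le> 1 \<longrightarrow>
      f ((1 - t) *\<^sub>R x + t *\<^sub>R y) \<le> ereal (1 - t) * f x + ereal t * f y)"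

definition ereal_lsc :: "('a::topological_space \<Rightarrow> ereal) \<Rightarrow> bool" where
  "ereal_lsc f \<longleftrightarrow> (\<forall>x. \<forall>c < f x. eventually (\<lambda>y. c < f y) (at x))"

definition subdiff :: "('a::real_inner \<Rightarrow> ereal) \<Rightarrow> 'a \<Rightarrow> 'a set" where
  "subdiff f u = {x. \<forall>z. f z \<ge> f u + ereal (x \<bullet> (z - u))}"

definition is_gradient_at :: "('a::real_inner \<Rightarrow> ereal) \<Rightarrow> 'a \<Rightarrow> 'a \<Rightarrow> bool" where
  "is_gradient_at f g x \<longleftrightarrow> (\<forall>\<^sub>F y in nhds x. f y \<noteq> \<infinity> \<and> f y \<noteq> -\<infinity>) \<and>
      ((\<lambda>y. real_of_ereal (f y)) has_derivative (\<lambda>h. g \<bullet> h)) (at x)"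

text \<open>The mixture P + eps (Q - P) = (1 - eps) P + eps Q on the sigma-algebra of P.\<close>
definition mixture :: "real \<Rightarrow> 'a measure \<Rightarrow> 'a measure \<Rightarrow> 'a measure" where
  "mixture \<epsilon> P Q = measure_of (space P) (sets P)
     (\<lambda>A. ennreal (1 - \<epsilon>) * emeasure P A + ennreal \<epsilon> * emeasure Q A)"

end

theory Submission
  imports Defs "HOL-Real_Asymp.Real_Asymp"
begin

text \<open>Since the Tukey depth of \<open>u\<close> is attained in direction \<open>v\<close> and is below \<open>\<epsilon>\<close>,
  the half-space \<open>{y. (y - u) \<bullet> v \<ge> 0}\<close>, and by continuity of measure even a slightly
  wider cone \<open>{x. (x - u) \<bullet> v \<ge> -c \<parallel>x - u\<parallel>}\<close>, has \<open>\<mu>\<close>-mass less than \<open>\<epsilon>\<close>.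
  The gradient map sends mass at least \<open>\<epsilon>\<close> into the ball \<open>k v + \<bbbB>\<close>, so some point
  \<open>x\<close> outside the cone has its gradient in that ball. Monotonicity of the
  subdifferential, \<open>(\<nabla>\<phi>(x) - y) \<bullet> (x - u) \<ge> 0\<close> for every \<open>y \<in> \<partial>\<phi>(u)\<close>,
  then forces \<open>\<parallel>y\<parallel> \<ge> k c - 1\<close>.\<close>

lemma has_real_derivative_le_secant:
  fixes h :: "real \<Rightarrow> real"
  assumes deriv: "(h has_real_derivative D) (at 0)"
    and below_chord: "\<And>t. 0 < t \<Longrightarrow> t < 1 \<Longrightarrow> h t \<le> (1 - t) * h 0 + t * h 1"
  shows "D \<le> h 1 - h 0"
proof -
  have "((\<lambda>t. (h t - h 0) / t) \<longlongrightarrow> D) (at 0)"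
    using deriv unfolding has_field_derivative_iff by simp
  then have lim: "((\<lambda>t. (h t - h 0) / t) \<longlongrightarrow> D) (at_right 0)"
    by (rule filterlim_mono) (simp_all add: at_le)
  have "\<forall>\<^sub>F t in at_right 0. 0 < t \<and> t < (1::real)"
    by (simp add: eventually_at_right_field) (meson zero_less_one)
  then have "\<forall>\<^sub>F t in at_right 0. (h t - h 0) / t \<le> h 1 - h 0"
  proof (rule eventually_mono)
    fix t :: real
    assume t: "0 < t \<and> t < 1"
    then have "h t - h 0 \<le> t * (h 1 - h 0)"
      using below_chord[of t] by (simp add: algebra_simps)
    with t show "(h t - h 0) / t \<le> h 1 - h 0"
      by (simp add: divide_simps mult.commute)
  qed
  then show ?thesis
    using tendsto_upperbound[OF lim] by simp
qed

lemma is_gradient_at_finite: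
  assumes "is_gradient_at f g x"
  shows "f x = ereal (real_of_ereal (f x))"
proof -
  have "f x \<noteq> \<infinity> \<and> f x \<noteq> -\<infinity>"
    using assms eventually_nhds_x_imp_x unfolding is_gradient_at_def by blast
  then show ?thesis
    by (cases "f x") auto
qed

lemma gradient_in_subdiff:
  fixes f :: "'a::real_inner \<Rightarrow> ereal"
  assumes convex: "ereal_convex f" and proper: "\<And>x. f x \<noteq> -\<infinity>"
    and grad: "is_gradient_at f g x"
  shows "g \<in> subdiff f x"
  unfolding subdiff_def
proof (intro CollectI allI)
  fix z
  define F where "F = (\<lambda>y. real_of_ereal (f y))"
  define h where "h = (\<lambda>t. F (x + t *\<^sub>R (z - x)))"
  have fx: "f x = ereal (F x)"
    using is_gradient_at_finite[OF grad] unfolding F_def .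
  show "f z \<ge> f x + ereal (g \<bullet> (z - x))"
  proof (cases "f z = \<infinity>")
    case False
    with proper[of z] have fz: "f z = ereal (F z)"
      unfolding F_def by (cases "f z") auto
    have "h t \<le> (1 - t) * h 0 + t * h 1" if "0 < t" "t < 1" for t
    proof -
      have "(1 - t) *\<^sub>R x + t *\<^sub>R z = x + t *\<^sub>R (z - x)"
        by (simp add: algebra_simps)
      then have "f (x + t *\<^sub>R (z - x)) \<le> ereal (1 - t) * f x + ereal t * f z"
        using convex that unfolding ereal_convex_def by (metis less_imp_le)
      also have "\<dots> = ereal ((1 - t) * F x + t * F z)"
        using fx fz by simp
      finally have le: "f (x + t *\<^sub>R (z - x)) \<le> ereal ((1 - t) * F x + t * F z)" .
      with proper[of "x + t *\<^sub>R (z - x)"] show ?thesis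
        unfolding h_def F_def by (cases "f (x + t *\<^sub>R (z - x))") auto
    qed
    moreover have "(h has_real_derivative g \<bullet> (z - x)) (at 0)"
    proof -
      have line: "((\<lambda>t. x + t *\<^sub>R (z - x)) has_derivative (\<lambda>t. t *\<^sub>R (z - x))) (at 0)"
        by (auto intro!: derivative_eq_intros)
      have "(F has_derivative (\<lambda>y. g \<bullet> y)) (at ((\<lambda>t. x + t *\<^sub>R (z - x)) 0))"
        using grad unfolding is_gradient_at_def F_def by simp
      from diff_chain_at[OF line this] show ?thesis
        unfolding h_def has_field_derivative_def o_def
        by (rule has_derivative_eq_rhs) (simp add: fun_eq_iff)
    qed
    ultimately have "g \<bullet> (z - x) \<le> h 1 - h 0"
      by (rule has_real_derivative_le_secant[rotated])
    then show ?thesis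
      using fx fz unfolding h_def by simp
  qed simp
qed

lemma subdiff_monotone:
  assumes "y \<in> subdiff f u" and "z \<in> subdiff f x" and "f x = ereal r"
  shows "0 \<le> (z - y) \<bullet> (x - u)"
proof -
  have y: "f x \<ge> f u + ereal (y \<bullet> (x - u))" and z: "f u \<ge> f x + ereal (z \<bullet> (u - x))"
    using assms(1,2) unfolding subdiff_def by auto
  obtain s where "f u = ereal s"
    using y z assms(3) by (cases "f u") auto
  with y z assms(3) show ?thesis
    by (simp add: inner_diff_left inner_diff_right)
qed

lemma subgradient_norm_lower_bound:
  fixes x u v y z :: "'a::real_inner"
  assumes monotone: "0 \<le> (z - y) \<bullet> (x - u)"
    and z_near: "norm (z - k *\<^sub>R v) \<le> r"
    and outside_cone: "(x - u) \<bullet> v < - c * norm (x - u)"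
    and "0 \<le> k"
  shows "k * c - r \<le> norm y"
proof -
  define d where "d = x - u"
  have "d \<noteq> 0"
    using outside_cone unfolding d_def by auto
  have "y \<bullet> d \<le> z \<bullet> d"
    using monotone unfolding d_def by (simp add: inner_diff_left)
  also have "z \<bullet> d = (k *\<^sub>R v + (z - k *\<^sub>R v)) \<bullet> d"
    by simp
  also have "\<dots> = k * (d \<bullet> v) + (z - k *\<^sub>R v) \<bullet> d"
    by (simp only: inner_add_left inner_scaleR_left inner_commute[of v d])
  also have "k * (d \<bullet> v) \<le> k * (- c * norm d)"
    using outside_cone \<open>0 \<le> k\<close> unfolding d_def by (intro mult_left_mono) auto
  also have "(z - k *\<^sub>R v) \<bullet> d \<le> r * norm d"
    using norm_cauchy_schwarz[of "z - k *\<^sub>R v" d] z_near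
    by (meson mult_right_mono norm_ge_zero order_trans)
  finally have "y \<bullet> d \<le> (r - k * c) * norm d"
    by (simp add: algebra_simps)
  moreover have "- (norm y * norm d) \<le> y \<bullet> d"
    using Cauchy_Schwarz_ineq2[of y d] by simp
  ultimately have "(k * c - r) * norm d \<le> norm y * norm d"
    by (simp add: algebra_simps)
  with \<open>d \<noteq> 0\<close> show ?thesis
    by simp
qed

lemma halfspace_measure_less_imp_cone_measure_less:
  fixes M :: "'a::real_inner measure"
  assumes "sets M = sets borel" and "finite_measure M"
    and halfspace: "measure M {x. (x - u) \<bullet> v \<ge> 0} < e"
  shows "\<exists>c>0. measure M {x. (x - u) \<bullet> v \<ge> - c * norm (x - u)} < e"
proof -
  interpret finite_measure M by fact
  define C where "C n = {x. (x - u) \<bullet> v \<ge> - (1 / real (Suc n)) * norm (x - u)}" for n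
  have C_sets: "C n \<in> sets M" for n
  proof -
    have "closed (C n)"
      unfolding C_def by (rule closed_Collect_le) (auto intro!: continuous_intros)
    with \<open>sets M = sets borel\<close> show ?thesis
      by simp
  qed
  have "C (Suc n) \<subseteq> C n" for n
  proof -
    have "1 / real (Suc (Suc n)) * norm (x - u) \<le> 1 / real (Suc n) * norm (x - u)" for x
      by (intro mult_right_mono) (auto simp: divide_simps)
    then show ?thesis
      unfolding C_def by (auto intro: order_trans[rotated])
  qed
  then have "decseq C"
    by (rule decseq_SucI)
  moreover have "(\<Inter>n. C n) = {x. (x - u) \<bullet> v \<ge> 0}"
  proof (intro equalityI subsetI)
    fix x
    assume x: "x \<in> (\<Inter>n. C n)"
    have "(x - u) \<bullet> v \<ge> - (1 / real (Suc n)) * norm (x - u)" for n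
      using x unfolding C_def by blast
    moreover have "(\<lambda>n. - (1 / real (Suc n)) * norm (x - u)) \<longlonglongrightarrow> 0"
      using tendsto_mult_right[OF tendsto_minus[OF LIMSEQ_inverse_real_of_nat], of "norm (x - u)"]
      by (simp add: inverse_eq_divide)
    ultimately have "0 \<le> (x - u) \<bullet> v"
      by (intro LIMSEQ_le_const2) auto
    then show "x \<in> {x. (x - u) \<bullet> v \<ge> 0}"
      by simp
  qed (auto simp: C_def intro: order_trans[rotated])
  ultimately have "(\<lambda>n. measure M (C n)) \<longlonglongrightarrow> measure M {x. (x - u) \<bullet> v \<ge> 0}"
    using Lim_measure_decseq[of C M] C_sets by (auto simp: emeasure_eq_measure)
  from order_tendstoD(2)[OF this halfspace] obtain n where "measure M (C n) < e"
    by (auto simp: eventually_sequentially)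
  then show ?thesis
    unfolding C_def by (intro exI[of _ "1 / real (Suc n)"]) auto
qed

lemma emeasure_mixture:
  assumes "sets Q = sets P" and "A \<in> sets P"
  shows "emeasure (mixture e P Q) A = ennreal (1 - e) * emeasure P A + ennreal e * emeasure Q A"
  unfolding mixture_def
proof (rule emeasure_measure_of_sigma)
  show "countably_additive (sets P) (\<lambda>A. ennreal (1 - e) * emeasure P A + ennreal e * emeasure Q A)"
    unfolding countably_additive_def
  proof (intro allI impI)
    fix B :: "nat \<Rightarrow> _"
    assume B: "range B \<subseteq> sets P" "disjoint_family B" "\<Union> (range B) \<in> sets P"
    have "(\<Sum>i. ennreal (1 - e) * emeasure P (B i) + ennreal e * emeasure Q (B i))
        = ennreal (1 - e) * (\<Sum>i. emeasure P (B i)) + ennreal e * (\<Sum>i. emeasure Q (B i))"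
      by (simp add: suminf_add[symmetric] ennreal_suminf_cmult)
    also have "\<dots> = ennreal (1 - e) * emeasure P (\<Union> (range B)) + ennreal e * emeasure Q (\<Union> (range B))"
      using suminf_emeasure[OF B(1,2)] suminf_emeasure[of B Q] B(1,2) \<open>sets Q = sets P\<close> by simp
    finally show "(\<Sum>i. ennreal (1 - e) * emeasure P (B i) + ennreal e * emeasure Q (B i))
        = ennreal (1 - e) * emeasure P (\<Union> (range B)) + ennreal e * emeasure Q (\<Union> (range B))" .
  qed
qed (auto simp: positive_def sets.sigma_algebra_axioms \<open>A \<in> sets P\<close>)

lemma measure_vimage_ge_mixture_weight:
  assumes "finite_measure M" and distr: "distr M borel g = mixture e P Q"
    and g: "g \<in> borel_measurable M" and "sets P = sets borel" and "sets Q = sets borel"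
    and B: "B \<in> sets borel" and "emeasure Q B = 1"
  shows "e \<le> measure M (g -` B \<inter> space M)"
proof -
  have "emeasure M (g -` B \<inter> space M) = emeasure (distr M borel g) B"
    by (rule emeasure_distr[symmetric, OF g B])
  also have "\<dots> = ennreal (1 - e) * emeasure P B + ennreal e"
    unfolding distr using assms by (subst emeasure_mixture) simp_all
  finally have "ennreal e \<le> emeasure M (g -` B \<inter> space M)"
    by simp
  then show ?thesis
    using \<open>finite_measure M\<close>
    by (cases "0 \<le> e") (auto simp: finite_measure.emeasure_eq_measure)
qed

lemma emeasure_uniform_measure_cball_self:
  fixes c :: "'a::euclidean_space"
  assumes "0 < r"
  shows "emeasure (uniform_measure lborel (cball c r)) (cball c r) = 1"
proof (rule emeasure_uniform_measure_1)
  show "emeasure lborel (cball c r) \<noteq> \<infinity>"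
    using emeasure_lborel_cball_finite[of c r] by simp
  show "emeasure lborel (cball c r) \<noteq> 0"
    using emeasure_cball[of r c] unit_ball_vol_pos[of "real DIM('a)"] assms
    by (simp del: unit_ball_vol_pos)
qed

lemma (in finite_measure) AE_bex_diff_of_measure_less:
  assumes "AE x in M. P x" and "S \<in> sets M" and "C \<in> sets M"
    and "measure M C < measure M S"
  shows "\<exists>x\<in>S - C. P x"
proof (rule ccontr)
  assume "\<not> (\<exists>x\<in>S - C. P x)"
  with assms(1) have "AE x in M. x \<notin> S - C"
    by (auto elim!: AE_mp)
  then have "S - C \<in> null_sets M"
    using assms(2,3) by (simp add: AE_iff_null_sets)
  then have "measure M S = measure M (S - (S - C))"
    using assms(2) by (simp add: measure_Diff_null_set)
  also have "\<dots> \<le> measure M C"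
    using assms(3) by (intro finite_measure_mono) auto
  finally show False
    using assms(4) by simp
qed

theorem mainTheorem7:
  fixes \<mu> P :: "'a::euclidean_space measure"
    and u v :: 'a
    and \<epsilon> :: real
    and \<phi> :: "nat \<Rightarrow> 'a \<Rightarrow> ereal"
    and g :: "nat \<Rightarrow> 'a \<Rightarrow> 'a"
  assumes "sets \<mu> = sets borel" and "prob_space \<mu>" and "absolutely_continuous lborel \<mu>"
    and "sets P = sets borel" and "prob_space P" and "absolutely_continuous lborel P"
    and "norm v = 1"
    and "measure \<mu> {y. (y - u) \<bullet> v \<ge> 0} = tukey_depth u \<mu>"
    and "0 < \<epsilon>" and "\<epsilon> < 1" and "tukey_depth u \<mu> < \<epsilon>" and "0 < tukey_depth u \<mu>"
    and "\<And>k. ereal_convex (\<phi> k)" and "\<And>k. ereal_lsc (\<phi> k)"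
    and "\<And>k x. \<phi> k x \<noteq> -\<infinity>"
    and "\<And>k. AE x in \<mu>. is_gradient_at (\<phi> k) (g k x) x"
    and "\<And>k. g k \<in> borel_measurable \<mu>"
    and "\<And>k. distr \<mu> borel (g k) =
           mixture \<epsilon> P (uniform_measure lborel (cball (real k *\<^sub>R v) 1))"
  shows "((\<lambda>k. INF y \<in> subdiff (\<phi> k) u. ereal (norm y)) \<longlongrightarrow> \<infinity>) sequentially"
proof -
  interpret prob_space \<mu> by fact
  obtain c where "0 < c"
    and cone: "measure \<mu> {x. (x - u) \<bullet> v \<ge> - c * norm (x - u)} < \<epsilon>" (is "measure \<mu> ?C < \<epsilon>")
    using halfspace_measure_less_imp_cone_measure_less[of \<mu> u v \<epsilon>] assms(1,8,11)
      finite_measure_axioms by auto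
  have "ereal (real k * c - 1) \<le> (INF y \<in> subdiff (\<phi> k) u. ereal (norm y))" for k
  proof -
    define S where "S = g k -` cball (real k *\<^sub>R v) 1 \<inter> space \<mu>"
    have "S \<in> sets \<mu>"
      unfolding S_def using assms(17) by measurable
    moreover have "?C \<in> sets \<mu>"
      using assms(1) by (simp add: closed_Collect_le continuous_intros)
    moreover have "\<epsilon> \<le> measure \<mu> S"
      unfolding S_def
      by (rule measure_vimage_ge_mixture_weight[OF finite_measure_axioms assms(18,17,4)])
        (simp_all add: emeasure_uniform_measure_cball_self del: emeasure_uniform_measure)
    ultimately obtain x where "x \<in> S" "x \<notin> ?C" and grad: "is_gradient_at (\<phi> k) (g k x) x"
      using AE_bex_diff_of_measure_less[OF assms(16)] cone by fastforce
    then have outside: "(x - u) \<bullet> v < - c * norm (x - u)"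
      and near: "norm (g k x - real k *\<^sub>R v) \<le> 1"
      by (auto simp: S_def dist_norm norm_minus_commute)
    have "real k * c - 1 \<le> norm y" if "y \<in> subdiff (\<phi> k) u" for y
      using gradient_in_subdiff[OF assms(13,15) grad] is_gradient_at_finite[OF grad]
      by (intro subgradient_norm_lower_bound[OF _ near outside]) (auto intro: subdiff_monotone[OF that])
    then show ?thesis
      by (auto intro!: INF_greatest)
  qed
  moreover have "((\<lambda>k. ereal (real k * c - 1)) \<longlongrightarrow> \<infinity>) sequentially"
    unfolding tendsto_PInfty_eq_at_top using \<open>0 < c\<close> by real_asymp
  ultimately show ?thesis
    unfolding tendsto_PInfty by (metis (no_types, lifting) eventually_mono order_less_le_trans)
qed

end
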